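(* For the class $\mathcal I_m$ of VCG auctions with bidder-specific reserves in $\{1/m,2/m,\dots,1\}$, the matrix $\Gamma^{\mathrm{VCG}}$ is $(2,1)$-admissible and implementable with complexity $m$ (with respect to learner actions $\mathcal I_m$, adversary actions = valuation profiles in $[0,1]^n$, and payoff $f(\vec r,\vec v)=\mathrm{Rev}(\vec r,\vec v)$).
   Context: Single-parameter setting: $n$ bidders, a family $\mathcal S\subseteq 2^{[n]}$ of feasible sets of bidders that can be served simultaneously, with $\emptyset\in\mathcal S$ and $\{i\}\in\mathcal S$ for every $i$. A valuation profile is $\vec v\in[0,1]^n$. A VCG auction with bidder-specific reserves $\vec r=(r_1,\dots,r_n)$: all bidders with $v_i<r_i$ are removed; if none remain nothing is allocated; otherwise a feasible set of remaining bidders maximizing $\sum v_i$ over served bidders is served, and each served bidder is charged the larger of $r_i$ and his VCG payment (the externality he imposes on the other remaining bidders, i.e., the maximum welfare of the others over feasible sets minus their welfare in the chosen allocation). $\mathrm{Rev}(\vec r,\vec v)$ is the total charge. $\mathcal I_m$ is the set of such auctions with every $r_i\in\{1/m,\dots,m/m\}$. $\Gamma^{\mathrm{VCG}}$ is the $|\mathcal I_m|\times n\lceil\log_2 m\rceil$ binary matrix whose entry in row $\vec r$ and column $j=(i-1)\lceil\log_2 m\rceil+\beta$ ($i\le n$, $1\le\beta\le\lceil\log_2 m\rceil$) is the $\beta$-th bit of the binary representation of the integer $mr_i$. A matrix $\Gamma$ (rows indexed by learner actions $x$) is $(\kappa,\delta)$-admissible if its rows are pairwise distinct, each column has at most $\kappa$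 distinct values, and distinct values in a column differ by at least $\delta$. It is implementable with complexity $M$ if for each column $j$ there is a finite set $S_j$ of pairs $(w,y)$ with weight $w\ge0$ and adversary action $y$, $|S_j|\le M$, such that $\Gamma_{xj}-\Gamma_{x'j}=\sum_{(w,y)\in S_j}w(f(x,y)-f(x',y))$ for all learner actions $x,x'$. *)

theory Defs
  imports Complex_Main
begin

text \<open>Bidders are 0,...,n-1. Valuation profiles and reserve vectors are functions
  nat => real, fixed to 0 outside the bidder range.\<close>

definition welfare :: "(nat \<Rightarrow> real) \<Rightarrow> nat set \<Rightarrow> real" where
  "welfare v A = (\<Sum>i\<in>A. v i)"

definition remaining :: "nat \<Rightarrow> (nat \<Rightarrow> real) \<Rightarrow> (nat \<Rightarrow> real) \<Rightarrow> nat set" where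
  "remaining n r v = {i. i < n \<and> r i \<le> v i}"

definition opt_welfare :: "nat set set \<Rightarrow> (nat \<Rightarrow> real) \<Rightarrow> nat set \<Rightarrow> real" where
  "opt_welfare S v R = Max {welfare v T | T. T \<in> S \<and> T \<subseteq> R}"

definition valid_alloc :: "nat \<Rightarrow> nat set set \<Rightarrow> ((nat \<Rightarrow> real) \<Rightarrow> (nat \<Rightarrow> real) \<Rightarrow> nat set) \<Rightarrow> bool" where
  "valid_alloc n S a \<longleftrightarrow>
     (\<forall>r v. remaining n r v \<noteq> {} \<longrightarrow>
        a r v \<in> S \<and> a r v \<subseteq> remaining n r v \<and>
        welfare v (a r v) = opt_welfare S v (remaining n r v))"

text \<open>Revenue of the VCG auction with reserves r on profile v: each served bidder pays
  the max of his reserve and his VCG payment (externality on the other remaining bidders).\<close>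
definition Rev :: "nat \<Rightarrow> nat set set \<Rightarrow> ((nat \<Rightarrow> real) \<Rightarrow> (nat \<Rightarrow> real) \<Rightarrow> nat set)
                    \<Rightarrow> (nat \<Rightarrow> real) \<Rightarrow> (nat \<Rightarrow> real) \<Rightarrow> real" where
  "Rev n S a r v =
     (let R = remaining n r v; A = a r v in
      if R = {} then 0
      else (\<Sum>i\<in>A. max (r i) (opt_welfare S v (R - {i}) - welfare v (A - {i}))))"

definition Imcls :: "nat \<Rightarrow> nat \<Rightarrow> (nat \<Rightarrow> real) set" where
  "Imcls n m = {r. (\<forall>i<n. \<exists>k\<in>{1..m}. r i = real k / real m) \<and> (\<forall>i. n \<le> i \<longrightarrow> r i = 0)}"

definition profiles :: "nat \<Rightarrow> (nat \<Rightarrow> real) set" where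
  "profiles n = {v. (\<forall>i<n. 0 \<le> v i \<and> v i \<le> 1) \<and> (\<forall>i. n \<le> i \<longrightarrow> v i = 0)}"

definition nbits :: "nat \<Rightarrow> nat" where
  "nbits m = nat \<lceil>log 2 (real m)\<rceil>"

text \<open>Columns: pairs (i, beta), i < n, 1 <= beta <= ceil(log2 m); corresponds to
  column (i-1)*ceil(log2 m)+beta with 1-based bidder index.\<close>
definition cols :: "nat \<Rightarrow> nat \<Rightarrow> (nat \<times> nat) set" where
  "cols n m = {(i, \<beta>). i < n \<and> 1 \<le> \<beta> \<and> \<beta> \<le> nbits m}"

text \<open>Bit beta (beta = 1 least significant) of the integer m * r_i.\<close>
definition GammaVCG :: "nat \<Rightarrow> (nat \<Rightarrow> real) \<Rightarrow> nat \<times> nat \<Rightarrow> real" where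
  "GammaVCG m r j = (case j of (i, \<beta>) \<Rightarrow>
      real ((nat \<lfloor>real m * r i\<rfloor> div 2 ^ (\<beta> - 1)) mod 2))"

definition admissible :: "'x set \<Rightarrow> 'j set \<Rightarrow> ('x \<Rightarrow> 'j \<Rightarrow> real) \<Rightarrow> nat \<Rightarrow> real \<Rightarrow> bool" where
  "admissible X J \<Gamma> \<kappa> \<delta> \<longleftrightarrow>
     (\<forall>x\<in>X. \<forall>x'\<in>X. x \<noteq> x' \<longrightarrow> (\<exists>j\<in>J. \<Gamma> x j \<noteq> \<Gamma> x' j)) \<and>
     (\<forall>j\<in>J. finite ((\<lambda>x. \<Gamma> x j) ` X) \<and> card ((\<lambda>x. \<Gamma> x j) ` X) \<le> \<kappa> \<and>
        (\<forall>x\<in>X. \<forall>x'\<in>X. \<Gamma> x j \<noteq> \<Gamma> x' j \<longrightarrow> \<delta> \<le> \<bar>\<Gamma> x j - \<Gamma> x' j\<bar>))"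

definition implementable :: "'x set \<Rightarrow> 'y set \<Rightarrow> 'j set \<Rightarrow> ('x \<Rightarrow> 'j \<Rightarrow> real)
                               \<Rightarrow> ('x \<Rightarrow> 'y \<Rightarrow> real) \<Rightarrow> nat \<Rightarrow> bool" where
  "implementable X Y J \<Gamma> f M \<longleftrightarrow>
     (\<forall>j\<in>J. \<exists>Sj :: (real \<times> 'y) set. finite Sj \<and> card Sj \<le> M \<and>
        (\<forall>(w, y)\<in>Sj. 0 \<le> w \<and> y \<in> Y) \<and>
        (\<forall>x\<in>X. \<forall>x'\<in>X. \<Gamma> x j - \<Gamma> x' j = (\<Sum>(w, y)\<in>Sj. w * (f x y - f x' y))))"

end

theory Submission imports Defs begin

text \<open>Admissibility: a reserve vector is determined by its integer levels \<open>m r\<^sub>i \<in> {1..m}\<close>,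
  and the lower \<open>\<lceil>log\<^sub>2 m\<rceil>\<close> bits determine such a level; every column is 0/1-valued.
  Implementability of column \<open>(i, \<beta>)\<close>: on the profile where only bidder \<open>i\<close> bids \<open>k/m\<close>, a
  reserve of level \<open>t\<close> earns \<open>t/m\<close> if \<open>t \<le> k\<close> and nothing otherwise. Hence nonnegative
  weights \<open>w\<^sub>k\<close> represent a target \<open>c(t)\<close> iff their tail sums are \<open>m c(t) / t\<close>, which
  decrease in \<open>t\<close> once the 0/1 bit is shifted by \<open>m\<close>; the shift cancels in differences.\<close>

lemma m_le_two_pow_nbits:
  assumes "1 \<le> m"
  shows "m \<le> 2 ^ nbits m"
proof -
  have "real m \<le> 2 powr real_of_int \<lceil>log 2 (real m)\<rceil>"
    using assms le_of_int_ceiling by (subst log_le_iff[symmetric]) auto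
  also have "real_of_int \<lceil>log 2 (real m)\<rceil> = real (nbits m)"
    using assms unfolding nbits_def by simp
  finally show ?thesis
    by (simp add: powr_realpow flip: of_nat_le_iff)
qed

lemma inj_on_take_bit_atLeastAtMost: "inj_on (take_bit nb :: nat \<Rightarrow> nat) {1..2 ^ nb}"
proof
  fix t t' :: nat assume t: "t \<in> {1..2 ^ nb}" and t': "t' \<in> {1..2 ^ nb}"
    and eq: "take_bit nb t = take_bit nb t'"
  have "take_bit nb s = (if s = 2 ^ nb then 0 else s)" if "s \<in> {1..2 ^ nb}" for s :: nat
    using that by (auto simp: take_bit_eq_mod)
  with t t' eq show "t = t'" by (auto split: if_splits)
qed

lemma low_bit_differs:
  fixes t t' :: nat
  assumes "t \<in> {1..2 ^ nb}" "t' \<in> {1..2 ^ nb}" "t \<noteq> t'"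
  shows "\<exists>k<nb. bit t k \<noteq> bit t' k"
proof -
  have "take_bit nb t \<noteq> take_bit nb t'"
    using inj_onD[OF inj_on_take_bit_atLeastAtMost _ assms(1,2)] assms(3) by blast
  then show ?thesis by (auto simp: bit_eq_iff bit_take_bit_iff)
qed

lemma admissible_01I:
  assumes "\<forall>x\<in>X. \<forall>x'\<in>X. x \<noteq> x' \<longrightarrow> (\<exists>j\<in>J. \<Gamma> x j \<noteq> \<Gamma> x' j)"
    and "\<And>x j. x \<in> X \<Longrightarrow> j \<in> J \<Longrightarrow> \<Gamma> x j \<in> {0, 1}"
  shows "admissible X J \<Gamma> 2 1"
  unfolding admissible_def
proof (intro conjI ballI impI assms(1)[rule_format])
  fix j assume j: "j \<in> J"
  then have sub: "(\<lambda>x. \<Gamma> x j) ` X \<subseteq> {0, 1}" using assms(2) by blast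
  show "finite ((\<lambda>x. \<Gamma> x j) ` X)" using sub finite_subset by blast
  show "card ((\<lambda>x. \<Gamma> x j) ` X) \<le> 2" using card_mono[OF _ sub] by simp
  fix x x' assume "x \<in> X" "x' \<in> X" "\<Gamma> x j \<noteq> \<Gamma> x' j"
  moreover from \<open>x \<in> X\<close> \<open>x' \<in> X\<close> j have "\<Gamma> x j \<in> {0, 1}" "\<Gamma> x' j \<in> {0, 1}"
    using assms(2) by blast+
  ultimately show "1 \<le> \<bar>\<Gamma> x j - \<Gamma> x' j\<bar>" by auto
qed

lemma implementable_if_affine:
  assumes "\<forall>j\<in>J. \<exists>Sj C. finite Sj \<and> card Sj \<le> M \<and> (\<forall>(w, y)\<in>Sj. 0 \<le> w \<and> y \<in> Y) \<and>
             (\<forall>x\<in>X. (\<Sum>(w, y)\<in>Sj. w * f x y) = \<Gamma> x j + C)"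
  shows "implementable X Y J \<Gamma> f M"
  unfolding implementable_def
proof
  fix j assume "j \<in> J"
  then obtain Sj C where Sj: "finite Sj" "card Sj \<le> M" "\<forall>(w, y)\<in>Sj. 0 \<le> w \<and> y \<in> Y"
    and rep: "\<forall>x\<in>X. (\<Sum>(w, y)\<in>Sj. w * f x y) = \<Gamma> x j + C"
    using assms by blast
  have "\<Gamma> x j - \<Gamma> x' j = (\<Sum>(w, y)\<in>Sj. w * (f x y - f x' y))" if "x \<in> X" "x' \<in> X" for x x'
    using rep that by (simp add: right_diff_distrib sum_subtractf case_prod_unfold)
  with Sj show "\<exists>Sj. finite Sj \<and> card Sj \<le> M \<and> (\<forall>(w, y)\<in>Sj. 0 \<le> w \<and> y \<in> Y) \<and>
      (\<forall>x\<in>X. \<forall>x'\<in>X. \<Gamma> x j - \<Gamma> x' j = (\<Sum>(w, y)\<in>Sj. w * (f x y - f x' y)))" by blast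
qed

definition threshold_potential :: "nat \<Rightarrow> (nat \<Rightarrow> real) \<Rightarrow> nat \<Rightarrow> real" where
  "threshold_potential m c t = (if t \<le> m then real m * c t / real t else 0)"

definition threshold_weight :: "nat \<Rightarrow> (nat \<Rightarrow> real) \<Rightarrow> nat \<Rightarrow> real" where
  "threshold_weight m c k = threshold_potential m c k - threshold_potential m c (Suc k)"

lemma threshold_weight_represents:
  assumes "1 \<le> t" "t \<le> m"
  shows "(\<Sum>k\<in>{1..m}. threshold_weight m c k * (if t \<le> k then real t / real m else 0)) = c t"
proof -
  have "(\<Sum>k\<in>{1..m}. threshold_weight m c k * (if t \<le> k then real t / real m else 0))
      = (\<Sum>k\<in>{1..m}. if t \<le> k then real t / real m * threshold_weight m c k else 0)"
    by (rule sum.cong) auto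
  also have "\<dots> = (\<Sum>k\<in>{k \<in> {1..m}. t \<le> k}. real t / real m * threshold_weight m c k)"
    by (rule sum.inter_filter[symmetric]) simp
  also have "{k \<in> {1..m}. t \<le> k} = {t..m}" using assms by auto
  also have "(\<Sum>k\<in>{t..m}. real t / real m * threshold_weight m c k)
      = real t / real m * (\<Sum>k\<in>{t..m}. threshold_weight m c k)"
    by (simp add: sum_distrib_left)
  also have "(\<Sum>k\<in>{t..m}. threshold_weight m c k) = threshold_potential m c t"
    using sum_Suc_diff[of t m "\<lambda>k. - threshold_potential m c k"] assms
    by (simp add: threshold_weight_def threshold_potential_def)
  finally show ?thesis
    using assms by (simp add: threshold_potential_def)
qed

lemma threshold_weight_nonneg:
  assumes "1 \<le> k" "k \<le> m" "0 \<le> c k"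
    and "k < m \<Longrightarrow> real k * c (Suc k) \<le> real (Suc k) * c k"
  shows "0 \<le> threshold_weight m c k"
proof (cases "k = m")
  case True
  with assms show ?thesis by (simp add: threshold_weight_def threshold_potential_def)
next
  case False
  with assms have "c (Suc k) / real (Suc k) \<le> c k / real k"
    by (simp add: divide_simps mult.commute)
  with False assms show ?thesis
    by (simp add: threshold_weight_def threshold_potential_def times_divide_eq_right[symmetric]
        mult_left_mono del: times_divide_eq_right)
qed

lemma shifted_unit_ratio_antitone:
  fixes b b' :: real
  assumes "0 \<le> b" "b' \<le> 1" "k < m"
  shows "real k * (b' + real m) \<le> real (Suc k) * (b + real m)"
proof -
  have "real k * (b' + real m) \<le> real m + real k * real m"
    using assms mult_left_le[of b' "real k"] by (simp add: distrib_left)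
  also have "\<dots> \<le> real (Suc k) * (b + real m)"
    using assms(1) by (simp add: algebra_simps)
  finally show ?thesis .
qed

definition reserve_level :: "nat \<Rightarrow> (nat \<Rightarrow> real) \<Rightarrow> nat \<Rightarrow> nat" where
  "reserve_level m r i = nat \<lfloor>real m * r i\<rfloor>"

lemma GammaVCG_eq_bit: "GammaVCG m r (i, \<beta>) = of_bool (bit (reserve_level m r i) (\<beta> - 1))"
  by (simp add: GammaVCG_def reserve_level_def bit_iff_odd odd_iff_mod_2_eq_one[symmetric] mod2_eq_if)

lemma Imcls_reserve_level:
  assumes "r \<in> Imcls n m" "i < n" "1 \<le> m"
  shows "reserve_level m r i \<in> {1..m}" "r i = real (reserve_level m r i) / real m"
proof -
  obtain k where k: "k \<in> {1..m}" "r i = real k / real m"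
    using assms unfolding Imcls_def by auto
  then have "reserve_level m r i = k" using assms(3) by (simp add: reserve_level_def)
  with k show "reserve_level m r i \<in> {1..m}" "r i = real (reserve_level m r i) / real m" by simp_all
qed

lemma Imcls_pos: "r \<in> Imcls n m \<Longrightarrow> i < n \<Longrightarrow> 1 \<le> m \<Longrightarrow> 0 < r i"
  unfolding Imcls_def by fastforce

lemma Imcls_eq_if_levels_eq:
  assumes "r \<in> Imcls n m" "r' \<in> Imcls n m" "1 \<le> m"
    and "\<forall>i<n. reserve_level m r i = reserve_level m r' i"
  shows "r = r'"
proof
  fix i show "r i = r' i"
  proof (cases "i < n")
    case True then show ?thesis using assms Imcls_reserve_level(2) by metis
  next
    case False then show ?thesis using assms(1,2) by (simp add: Imcls_def)
  qed
qed

lemma admissible_GammaVCG: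
  assumes "1 \<le> m"
  shows "admissible (Imcls n m) (cols n m) (GammaVCG m) 2 1"
proof (rule admissible_01I)
  show "\<forall>r\<in>Imcls n m. \<forall>r'\<in>Imcls n m. r \<noteq> r' \<longrightarrow> (\<exists>j\<in>cols n m. GammaVCG m r j \<noteq> GammaVCG m r' j)"
  proof (intro ballI impI)
    fix r r' assume r: "r \<in> Imcls n m" and r': "r' \<in> Imcls n m" and "r \<noteq> r'"
    then obtain i where i: "i < n" and ne: "reserve_level m r i \<noteq> reserve_level m r' i"
      using Imcls_eq_if_levels_eq assms by blast
    have "{1..m} \<subseteq> {1..2 ^ nbits m}" using m_le_two_pow_nbits[OF assms] by auto
    then obtain k where "k < nbits m" "bit (reserve_level m r i) k \<noteq> bit (reserve_level m r' i) k"
      using low_bit_differs ne Imcls_reserve_level(1)[OF r i assms] Imcls_reserve_level(1)[OF r' i assms]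
      by blast
    then show "\<exists>j\<in>cols n m. GammaVCG m r j \<noteq> GammaVCG m r' j"
      using i by (intro bexI[of _ "(i, Suc k)"]) (auto simp: cols_def GammaVCG_eq_bit)
  qed
  show "GammaVCG m r j \<in> {0, 1}" for r j
    by (cases j) (simp add: GammaVCG_eq_bit)
qed

definition single_bid :: "nat \<Rightarrow> real \<Rightarrow> nat \<Rightarrow> real" where
  "single_bid i x = (\<lambda>j. if j = i then x else 0)"

lemma opt_welfare_empty: "{} \<in> S \<Longrightarrow> opt_welfare S v {} = 0"
proof -
  assume "{} \<in> S"
  then have "{welfare v T | T. T \<in> S \<and> T \<subseteq> {}} = {0}" by (auto simp: welfare_def)
  then show ?thesis unfolding opt_welfare_def by simp
qed

lemma opt_welfare_single_bid:
  assumes "{} \<in> S" "{i} \<in> S" "0 \<le> x"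
  shows "opt_welfare S (single_bid i x) {i} = x"
proof -
  have "{welfare (single_bid i x) T | T. T \<in> S \<and> T \<subseteq> {i}}
      = {welfare (single_bid i x) {}, welfare (single_bid i x) {i}}"
    using assms(1,2) by (auto simp: subset_singleton_iff)
  then show ?thesis
    using assms(3) by (simp add: opt_welfare_def welfare_def single_bid_def)
qed

lemma Rev_single_bid:
  assumes "{} \<in> S" "{i} \<in> S" "valid_alloc n S a" "i < n"
    and pos: "\<forall>j<n. 0 < r j" and "0 < x"
  shows "Rev n S a r (single_bid i x) = (if r i \<le> x then r i else 0)"
proof (cases "r i \<le> x")
  case False
  then have "remaining n r (single_bid i x) = {}"
    using pos by (auto simp: remaining_def single_bid_def not_le)
  with False show ?thesis by (simp add: Rev_def)
next
  case True
  let ?v = "single_bid i x"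
  have rem: "remaining n r ?v = {i}"
    using True pos \<open>i < n\<close> by (auto simp: remaining_def single_bid_def not_le)
  then have "a r ?v \<subseteq> {i}" "welfare ?v (a r ?v) = x"
    using assms(3)[unfolded valid_alloc_def, rule_format, of r ?v]
      opt_welfare_single_bid[OF assms(1,2)] \<open>0 < x\<close>
    by simp_all
  then have "a r ?v = {i}"
    using \<open>0 < x\<close> unfolding subset_singleton_iff by (auto simp: welfare_def)
  with True rem pos \<open>i < n\<close> show ?thesis
    by (simp add: Rev_def opt_welfare_empty[OF assms(1)] welfare_def)
qed

lemma Rev_single_bid_level:
  assumes "1 \<le> m" "{} \<in> S" "\<forall>i<n. {i} \<in> S" "valid_alloc n S a"
    and "r \<in> Imcls n m" "i < n" "k \<in> {1..m}"
  shows "Rev n S a r (single_bid i (real k / real m))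
       = (if reserve_level m r i \<le> k then real (reserve_level m r i) / real m else 0)"
proof -
  have "Rev n S a r (single_bid i (real k / real m)) = (if r i \<le> real k / real m then r i else 0)"
    using assms Imcls_pos[OF assms(5) _ assms(1)] by (intro Rev_single_bid) auto
  then show ?thesis
    using Imcls_reserve_level(2)[OF assms(5,6,1)] assms(1) by (simp add: divide_le_cancel)
qed

lemma implementable_GammaVCG:
  assumes "1 \<le> m" "{} \<in> S" "\<forall>i<n. {i} \<in> S" "valid_alloc n S a"
  shows "implementable (Imcls n m) (profiles n) (cols n m) (GammaVCG m) (Rev n S a) m"
proof (rule implementable_if_affine, intro ballI)
  fix j assume "j \<in> cols n m"
  then obtain i \<beta> where j: "j = (i, \<beta>)" and i: "i < n" by (auto simp: cols_def)
  define c where "c t = of_bool (bit t (\<beta> - 1)) + real m" for t :: nat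
  define test where "test k = (threshold_weight m c k, single_bid i (real k / real m))" for k
  have "inj_on test {1..m}"
  proof (rule inj_onI)
    fix k k' assume "test k = test k'"
    then have "single_bid i (real k / real m) i = single_bid i (real k' / real m) i"
      by (simp add: test_def)
    with assms(1) show "k = k'" by (simp add: single_bid_def)
  qed
  then have rep: "(\<Sum>(w, y)\<in>test ` {1..m}. w * Rev n S a r y) = GammaVCG m r j + real m"
    if r: "r \<in> Imcls n m" for r
  proof -
    let ?t = "reserve_level m r i"
    have "(\<Sum>(w, y)\<in>test ` {1..m}. w * Rev n S a r y)
        = (\<Sum>k\<in>{1..m}. threshold_weight m c k * (if ?t \<le> k then real ?t / real m else 0))"
      unfolding sum.reindex[OF \<open>inj_on test {1..m}\<close>]
      using Rev_single_bid_level[OF assms r i] by (intro sum.cong) (simp_all add: test_def)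
    also have "\<dots> = c ?t"
      using Imcls_reserve_level(1)[OF r i assms(1)] by (intro threshold_weight_represents) auto
    finally show ?thesis by (simp add: c_def j GammaVCG_eq_bit)
  qed
  have "0 \<le> threshold_weight m c k" if "k \<in> {1..m}" for k
    using that shifted_unit_ratio_antitone by (intro threshold_weight_nonneg) (auto simp: c_def)
  moreover have "single_bid i (real k / real m) \<in> profiles n" if "k \<in> {1..m}" for k
    using that i by (auto simp: profiles_def single_bid_def)
  ultimately have "\<forall>(w, y)\<in>test ` {1..m}. 0 \<le> w \<and> y \<in> profiles n"
    by (auto simp: test_def)
  with rep show "\<exists>Sj C. finite Sj \<and> card Sj \<le> m \<and> (\<forall>(w, y)\<in>Sj. 0 \<le> w \<and> y \<in> profiles n) \<and>
      (\<forall>r\<in>Imcls n m. (\<Sum>(w, y)\<in>Sj. w * Rev n S a r y) = GammaVCG m r j + C)"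
    using card_image_le[of "{1..m}" test] by (intro exI[of _ "test ` {1..m}"] exI) auto
qed

theorem lemma3p1:
  fixes n m :: nat and S :: "nat set set"
    and a :: "(nat \<Rightarrow> real) \<Rightarrow> (nat \<Rightarrow> real) \<Rightarrow> nat set"
  assumes "1 \<le> m"
    and "S \<subseteq> Pow {..<n}" and "{} \<in> S" and "\<forall>i<n. {i} \<in> S"
    and "valid_alloc n S a"
  shows "admissible (Imcls n m) (cols n m) (GammaVCG m) 2 1 \<and>
         implementable (Imcls n m) (profiles n) (cols n m) (GammaVCG m) (Rev n S a) m"
  using admissible_GammaVCG[OF assms(1)] implementable_GammaVCG[OF assms(1,3-5)] by blast

end
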